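(* Let $P$ be a stochastic matrix over a countable set $\Omega$, let $C\subseteq\Omega$ and let $p=\sum_{i\in C}p_i\in\ell^\infty(\Omega)$. Then $p$ is reducing for $Arv(P)$ if and only if for every path $\gamma:\{0,\dots,\ell\}\to\Omega$ in the directed graph of $P$ with $\gamma(0),\gamma(\ell)\in C$ one has $\gamma(k)\in C$ for all $0\le k\le\ell$.
   Context: A stochastic matrix has nonnegative entries and row sums $1$; $P^{(n)}_{ij}$ is the $(i,j)$ entry of $P^n$; $p_i$ is the indicator of $\{i\}$. A path in $P$ is $\gamma:\{0,\dots,\ell\}\to\Omega$ with $P_{\gamma(k)\gamma(k+1)}>0$ for $0\le k\le\ell-1$. $Arv(P)$: $Arv(P)_0=\ell^\infty(\Omega)$; $Arv(P)_n$ ($n\ge1$) is the set of complex $\Omega\times\Omega$ matrices $A=[a_{ij}]$ with $a_{ij}=0$ whenever $P^{(n)}_{ij}=0$ and $\sup_j\sum_i|a_{ij}|^2<\infty$, a W*-correspondence over $\ell^\infty(\Omega)$ with actions by diagonal matrices and inner product $\mathrm{Diag}(A^*B)$; $U_{n,m}(A\otimes B)=(\sqrt{P^{n+m}})^{\flat}*[(\sqrt{P^n}*A)(\sqrt{P^m}*B)]$ for $n,m\ge1$ ($*$ entrywise product, $\sqrt\cdot$ entrywise, $M^\flat_{ik}=M_{ik}^{-1}$ if $M_{ik}>0$, else $0$), $U_{0,n},U_{n,0}$ module actions. A projection $p\in\ell^\infty(\Omega)$ is reducing for $Arv(P)$ if $U_{n,m}^*(p\,Arv(P)_{n+m}\,p)\subseteq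 p\,Arv(P)_n\,p\otimes p\,Arv(P)_m\,p$ for all $n,m$. *)

theory Defs
  imports "HOL-Analysis.Analysis"
begin

definition stochastic :: "('a::countable \<Rightarrow> 'a \<Rightarrow> real) \<Rightarrow> bool" where
  "stochastic P \<longleftrightarrow> (\<forall>i j. 0 \<le> P i j) \<and> (\<forall>i. ((\<lambda>j. P i j) has_sum 1) UNIV)"

fun matpow :: "('a::countable \<Rightarrow> 'a \<Rightarrow> real) \<Rightarrow> nat \<Rightarrow> 'a \<Rightarrow> 'a \<Rightarrow> real" where
  "matpow P 0 = (\<lambda>i j. if i = j then 1 else 0)"
| "matpow P (Suc n) = (\<lambda>i j. \<Sum>\<^sub>\<infinity>k. matpow P n i k * P k j)"

definition is_path :: "('a \<Rightarrow> 'a \<Rightarrow> real) \<Rightarrow> (nat \<Rightarrow> 'a) \<Rightarrow> nat \<Rightarrow> bool" where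
  "is_path P \<gamma> l \<longleftrightarrow> (\<forall>k<l. P (\<gamma> k) (\<gamma> (Suc k)) > 0)"

definition supp :: "('a::countable \<Rightarrow> 'a \<Rightarrow> real) \<Rightarrow> nat \<Rightarrow> ('a \<times> 'a) set" where
  "supp P n = {(i, j). matpow P n i j > 0}"

text \<open>Column-bounded matrices supported in S. With S = supp P n this is Arv(P)_n;
  for n = 0 (P^(0) = I) it is the set of bounded diagonal matrices, i.e. l^infty(Omega).\<close>
definition colmat :: "('a \<times> 'a) set \<Rightarrow> ('a \<Rightarrow> 'a \<Rightarrow> complex) set" where
  "colmat S = {A. (\<forall>i j. (i, j) \<notin> S \<longrightarrow> A i j = 0)
       \<and> (\<forall>j. (\<lambda>i. (cmod (A i j))\<^sup>2) summable_on UNIV)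
       \<and> (\<exists>M. \<forall>j. (\<Sum>\<^sub>\<infinity>i. (cmod (A i j))\<^sup>2) \<le> M)}"

definition Arv :: "('a::countable \<Rightarrow> 'a \<Rightarrow> real) \<Rightarrow> nat \<Rightarrow> ('a \<Rightarrow> 'a \<Rightarrow> complex) set" where
  "Arv P n = colmat (supp P n)"

text \<open>Diagonal-valued inner product Diag(A^* B), j-th diagonal entry.\<close>
definition arv_inner :: "('a \<Rightarrow> 'a \<Rightarrow> complex) \<Rightarrow> ('a \<Rightarrow> 'a \<Rightarrow> complex) \<Rightarrow> 'a \<Rightarrow> complex" where
  "arv_inner A B j = (\<Sum>\<^sub>\<infinity>i. cnj (A i j) * B i j)"

text \<open>Concrete model of the (self-dual) interior tensor product E \<otimes> F over l^infty(Omega)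
  of the correspondences E = colmat S1, F = colmat S2: the elementary tensor A \<otimes> B is
  the array (i,k,j) \<mapsto> A i k * B k j, and the l^infty-valued inner product is
  <A\<otimes>B, A'\<otimes>B'>_j = sum over (i,k) of conj(A i k B k j) A' i k B' k j.\<close>
definition ten_model :: "('a \<times> 'a) set \<Rightarrow> ('a \<times> 'a) set \<Rightarrow> ('a \<Rightarrow> 'a \<Rightarrow> 'a \<Rightarrow> complex) set" where
  "ten_model S1 S2 = {T. (\<forall>i k j. ((i, k) \<notin> S1 \<or> (k, j) \<notin> S2) \<longrightarrow> T i k j = 0)
       \<and> (\<forall>j. (\<lambda>(i, k). (cmod (T i k j))\<^sup>2) summable_on UNIV)
       \<and> (\<exists>M. \<forall>j. (\<Sum>\<^sub>\<infinity>(i, k). (cmod (T i k j))\<^sup>2) \<le> M)}"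

definition elem_tensor :: "('a \<Rightarrow> 'a \<Rightarrow> complex) \<Rightarrow> ('a \<Rightarrow> 'a \<Rightarrow> complex) \<Rightarrow> 'a \<Rightarrow> 'a \<Rightarrow> 'a \<Rightarrow> complex" where
  "elem_tensor A B = (\<lambda>i k j. A i k * B k j)"

definition ten_inner :: "('a \<Rightarrow> 'a \<Rightarrow> 'a \<Rightarrow> complex) \<Rightarrow> ('a \<Rightarrow> 'a \<Rightarrow> 'a \<Rightarrow> complex) \<Rightarrow> 'a \<Rightarrow> complex" where
  "ten_inner S T j = (\<Sum>\<^sub>\<infinity>(i, k). cnj (S i k j) * T i k j)"

text \<open>The map U_{n,m}: (sqrt P^(n+m))^flat * [(sqrt P^(n) * A)(sqrt P^(m) * B)], extended
  from elementary tensors A \<otimes> B to the whole tensor model.\<close>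
definition Umap :: "('a::countable \<Rightarrow> 'a \<Rightarrow> real) \<Rightarrow> nat \<Rightarrow> nat \<Rightarrow> ('a \<Rightarrow> 'a \<Rightarrow> 'a \<Rightarrow> complex) \<Rightarrow> 'a \<Rightarrow> 'a \<Rightarrow> complex" where
  "Umap P n m T = (\<lambda>i j. (if matpow P (n + m) i j > 0
       then complex_of_real (1 / sqrt (matpow P (n + m) i j)) else 0) *
       (\<Sum>\<^sub>\<infinity>k. complex_of_real (sqrt (matpow P n i k)) * complex_of_real (sqrt (matpow P m k j)) * T i k j))"

definition proj :: "'a set \<Rightarrow> 'a \<Rightarrow> complex" where
  "proj C i = (if i \<in> C then 1 else 0)"

definition compress :: "'a set \<Rightarrow> ('a \<Rightarrow> 'a \<Rightarrow> complex) set \<Rightarrow> ('a \<Rightarrow> 'a \<Rightarrow> complex) set" where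
  "compress C X = {(\<lambda>i j. proj C i * A i j * proj C j) | A. A \<in> X}"

definition csupp :: "('a::countable \<Rightarrow> 'a \<Rightarrow> real) \<Rightarrow> 'a set \<Rightarrow> nat \<Rightarrow> ('a \<times> 'a) set" where
  "csupp P C n = {(i, j). (i, j) \<in> supp P n \<and> i \<in> C \<and> j \<in> C}"

definition is_Uadj :: "('a::countable \<Rightarrow> 'a \<Rightarrow> real) \<Rightarrow> nat \<Rightarrow> nat \<Rightarrow> ('a \<Rightarrow> 'a \<Rightarrow> complex) \<Rightarrow> ('a \<Rightarrow> 'a \<Rightarrow> 'a \<Rightarrow> complex) \<Rightarrow> bool" where
  "is_Uadj P n m A T \<longleftrightarrow> T \<in> ten_model (supp P n) (supp P m) \<and>
     (\<forall>S \<in> ten_model (supp P n) (supp P m). \<forall>j. arv_inner (Umap P n m S) A j = ten_inner S T j)"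

text \<open>p is reducing: U_{n,m}^*(p Arv_{n+m} p) \<subseteq> p Arv_n p \<otimes> p Arv_m p for all n, m.\<close>
definition reducing :: "('a::countable \<Rightarrow> 'a \<Rightarrow> real) \<Rightarrow> 'a set \<Rightarrow> bool" where
  "reducing P C \<longleftrightarrow> (\<forall>n m. \<forall>A \<in> compress C (Arv P (n + m)).
       \<exists>T. is_Uadj P n m A T \<and> T \<in> ten_model (csupp P C n) (csupp P C m))"

end

theory Submission
  imports Defs
begin

text \<open>On the (i, k, j)-arrays of the tensor model, U_{n,m} is summation over k against the weights
  w(i,k,j) = sqrt (P^n_ik P^m_kj / P^{n+m}_ij). By Chapman-Kolmogorov the squares of these weights
  sum to 1 over k, so the adjoint of U_{n,m} is A \<mapsto> (w(i,k,j) A_ij). This array is supported in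
  p Arv_n p \<otimes> p Arv_m p for every A in p Arv_{n+m} p precisely when each intermediate state k with
  P^n_ik P^m_kj > 0 between i, j \<in> C lies in C; matrix units show that this is also necessary.
  Finally, P^n_ik > 0 means that some path of length n leads from i to k.\<close>

lemma has_sum_single_support:
  fixes f :: "'b \<Rightarrow> 'c::topological_comm_monoid_add"
  assumes "\<And>x. x \<noteq> a \<Longrightarrow> f x = 0"
  shows "(f has_sum f a) UNIV"
  by (rule has_sum_finite_neutralI[of "{a}"]) (use assms in auto)

lemma infsum_single_support:
  fixes f :: "'b \<Rightarrow> 'c::{topological_comm_monoid_add,t2_space}"
  assumes "\<And>x. x \<noteq> a \<Longrightarrow> f x = 0"
  shows "infsum f UNIV = f a"
  by (rule infsumI[OF has_sum_single_support[OF assms]])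

lemma nonneg_has_sum_term_le:
  fixes f :: "'b \<Rightarrow> real"
  assumes "(f has_sum s) UNIV" "\<And>x. 0 \<le> f x"
  shows "f a \<le> s"
  using finite_sum_le_has_sum[OF assms(1), of "{a}"] assms(2) by simp

lemma nonneg_has_sum_pos_iff:
  fixes f :: "'b \<Rightarrow> real"
  assumes "(f has_sum s) UNIV" "\<And>x. 0 \<le> f x"
  shows "0 < s \<longleftrightarrow> (\<exists>x. 0 < f x)"
proof
  assume "0 < s"
  show "\<exists>x. 0 < f x"
  proof (rule ccontr)
    assume "\<nexists>x. 0 < f x"
    then have "f x = 0" for x
      using assms(2)[of x] by (metis antisym not_less)
    then have "s = 0"
      using has_sum_unique[OF assms(1) has_sum_0] by blast
    with \<open>0 < s\<close> show False by simp
  qed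
next
  assume "\<exists>x. 0 < f x"
  then obtain x where "0 < f x" ..
  with nonneg_has_sum_term_le[OF assms, of x] show "0 < s" by linarith
qed

lemma nonneg_has_sum_swap:
  fixes f :: "'b \<Rightarrow> 'c \<Rightarrow> real"
  assumes nonneg: "\<And>k j. 0 \<le> f k j"
    and rows: "\<And>k. (f k has_sum g k) UNIV"
    and total: "(g has_sum s) UNIV"
  shows "((\<lambda>j. \<Sum>\<^sub>\<infinity>k. f k j) has_sum s) UNIV"
proof -
  have "(\<lambda>(k, j). f k j) summable_on UNIV \<times> UNIV"
    using summable_on_SigmaI[where f="\<lambda>(k, j). f k j" and A=UNIV and B="\<lambda>_. UNIV" and g=g] rows total nonneg
    by (auto simp: summable_on_def)
  with rows total have "((\<lambda>(k, j). f k j) has_sum s) (UNIV \<times> UNIV)"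
    using has_sum_SigmaI[where f="\<lambda>(k, j). f k j" and A=UNIV and B="\<lambda>_. UNIV" and g=g] by auto
  then have swapped: "((\<lambda>(j, k). f k j) has_sum s) (UNIV \<times> UNIV)"
    using has_sum_swap[of "\<lambda>(k, j). f k j" UNIV UNIV s] by simp
  then have "(\<lambda>k. f k j) summable_on UNIV" for j
    using summable_on_SigmaD1[where f="\<lambda>j k. f k j" and A=UNIV and B="\<lambda>_. UNIV"]
    by (auto simp: summable_on_def)
  with swapped show ?thesis
    using has_sum_SigmaD[where f="\<lambda>(j, k). f k j" and A=UNIV and B="\<lambda>_. UNIV"] by auto
qed

lemma is_path_prefix: "is_path P \<gamma> l \<Longrightarrow> k \<le> l \<Longrightarrow> is_path P \<gamma> k"
  unfolding is_path_def by auto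

lemma is_path_suffix: "is_path P \<gamma> l \<Longrightarrow> is_path P (\<lambda>t. \<gamma> (k + t)) (l - k)"
  unfolding is_path_def by auto

lemma is_path_append:
  assumes "is_path P \<gamma>1 n" "is_path P \<gamma>2 m" "\<gamma>1 n = \<gamma>2 0"
  shows "is_path P (\<lambda>t. if t \<le> n then \<gamma>1 t else \<gamma>2 (t - n)) (n + m)"
  unfolding is_path_def
proof (intro allI impI)
  fix t assume "t < n + m"
  consider "Suc t \<le> n" | "t = n" | "n < t" by linarith
  then show "0 < P (if t \<le> n then \<gamma>1 t else \<gamma>2 (t - n))
      (if Suc t \<le> n then \<gamma>1 (Suc t) else \<gamma>2 (Suc t - n))"
  proof cases
    case 3
    then have "Suc t - n = Suc (t - n)" "t - n < m" using \<open>t < n + m\<close> by auto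
    with 3 show ?thesis using assms(2) by (simp add: is_path_def)
  qed (use assms \<open>t < n + m\<close> in \<open>auto simp: is_path_def\<close>)
qed

lemma stochastic_nonneg: "stochastic Q \<Longrightarrow> 0 \<le> Q i j"
  unfolding stochastic_def by blast

lemma stochastic_row_sum: "stochastic Q \<Longrightarrow> (Q i has_sum 1) UNIV"
  unfolding stochastic_def by blast

lemma stochastic_le_1:
  assumes "stochastic Q"
  shows "Q i j \<le> 1"
  using nonneg_has_sum_term_le[OF stochastic_row_sum[OF assms] stochastic_nonneg[OF assms]] .

locale stochastic_matrix =
  fixes P :: "'a::countable \<Rightarrow> 'a \<Rightarrow> real"
  assumes is_stochastic: "stochastic P"
begin

lemmas P_nonneg = stochastic_nonneg[OF is_stochastic]
  and P_row_sum = stochastic_row_sum[OF is_stochastic]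
  and P_le_1 = stochastic_le_1[OF is_stochastic]

lemma matpow_stochastic: "stochastic (matpow P n)"
  unfolding stochastic_def
proof (induction n)
  case 0
  have "(matpow P 0 i has_sum 1) UNIV" for i
    using has_sum_single_support[of i "matpow P 0 i"] by simp
  then show ?case by simp
next
  case (Suc n)
  have "((\<lambda>j. \<Sum>\<^sub>\<infinity>k. matpow P n i k * P k j) has_sum 1) UNIV" for i
  proof (rule nonneg_has_sum_swap)
    show "0 \<le> matpow P n i k * P k j" for k j
      using Suc P_nonneg by simp
    show "((\<lambda>j. matpow P n i k * P k j) has_sum matpow P n i k) UNIV" for k
      using has_sum_cmult_right[OF P_row_sum, of "matpow P n i k" k] by simp
    show "(matpow P n i has_sum 1) UNIV" using Suc by simp
  qed
  then show ?case
    using Suc P_nonneg by (simp add: infsum_nonneg)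
qed

lemmas matpow_nonneg = stochastic_nonneg[OF matpow_stochastic]
  and matpow_row_sum = stochastic_row_sum[OF matpow_stochastic]
  and matpow_le_1 = stochastic_le_1[OF matpow_stochastic]

lemma matpow_mult_summable:
  assumes "\<And>k. 0 \<le> b k" "\<And>k. b k \<le> 1"
  shows "(\<lambda>k. matpow P n i k * b k) summable_on UNIV"
proof (rule summable_on_comparison_test)
  show "matpow P n i summable_on UNIV"
    using matpow_row_sum by (auto simp: summable_on_def)
  show "matpow P n i k * b k \<le> matpow P n i k" for k
    using assms matpow_nonneg by (simp add: mult_left_le)
  show "0 \<le> matpow P n i k * b k" for k
    using assms matpow_nonneg by simp
qed

lemma matpow_Suc_has_sum: "((\<lambda>k. matpow P n i k * P k j) has_sum matpow P (Suc n) i j) UNIV"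
  using has_sum_infsum[OF matpow_mult_summable[OF P_nonneg P_le_1]] by simp

lemma matpow_add_has_sum:
  "((\<lambda>k. matpow P n i k * matpow P m k j) has_sum matpow P (n + m) i j) UNIV"
proof (induction m arbitrary: j)
  case 0
  show ?case using has_sum_single_support[of j "\<lambda>k. matpow P n i k * matpow P 0 k j"] by simp
next
  case (Suc m)
  define s where "s = (\<Sum>\<^sub>\<infinity>k. matpow P n i k * matpow P (Suc m) k j)"
  have total: "((\<lambda>k. matpow P n i k * matpow P (Suc m) k j) has_sum s) UNIV"
    unfolding s_def by (rule has_sum_infsum, rule matpow_mult_summable[OF matpow_nonneg matpow_le_1])
  have "((\<lambda>l. \<Sum>\<^sub>\<infinity>k. matpow P n i k * (matpow P m k l * P l j)) has_sum s) UNIV"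
  proof (rule nonneg_has_sum_swap[OF _ _ total])
    show "0 \<le> matpow P n i k * (matpow P m k l * P l j)" for k l
      using matpow_nonneg P_nonneg by simp
    show "((\<lambda>l. matpow P n i k * (matpow P m k l * P l j)) has_sum
        matpow P n i k * matpow P (Suc m) k j) UNIV" for k
      by (rule has_sum_cmult_right[OF matpow_Suc_has_sum])
  qed
  moreover have "(\<Sum>\<^sub>\<infinity>k. matpow P n i k * (matpow P m k l * P l j)) = matpow P (n + m) i l * P l j" for l
    using infsumI[OF Suc.IH[of l]] by (simp add: mult.assoc[symmetric] infsum_cmult_left')
  ultimately have "s = matpow P (Suc (n + m)) i j"
    using has_sum_unique[OF _ matpow_Suc_has_sum] by simp
  with total show ?case by simp
qed

lemma matpow_add_pos_iff:
  "0 < matpow P (n + m) i j \<longleftrightarrow> (\<exists>k. 0 < matpow P n i k \<and> 0 < matpow P m k j)"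
proof -
  have "0 < matpow P (n + m) i j \<longleftrightarrow> (\<exists>k. 0 < matpow P n i k * matpow P m k j)"
    by (rule nonneg_has_sum_pos_iff[OF matpow_add_has_sum]) (simp add: matpow_nonneg)
  also have "\<dots> \<longleftrightarrow> (\<exists>k. 0 < matpow P n i k \<and> 0 < matpow P m k j)"
    using matpow_nonneg by (simp add: zero_less_mult_iff not_less[symmetric])
  finally show ?thesis .
qed


lemma matpow_Suc_0: "matpow P (Suc 0) i j = P i j"
  using infsum_single_support[of i "\<lambda>k. matpow P 0 i k * P k j"] by simp

lemma matpow_pos_iff_path:
  "0 < matpow P n i j \<longleftrightarrow> (\<exists>\<gamma>. is_path P \<gamma> n \<and> \<gamma> 0 = i \<and> \<gamma> n = j)"
proof (induction n arbitrary: j)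
  case 0
  show ?case by (auto simp: is_path_def)
next
  case (Suc n)
  have "0 < matpow P (Suc n) i j \<longleftrightarrow> (\<exists>k. 0 < matpow P n i k \<and> 0 < P k j)"
    using matpow_add_pos_iff[of n 1 i j] unfolding One_nat_def matpow_Suc_0 by simp
  also have "\<dots> \<longleftrightarrow> (\<exists>\<gamma>. is_path P \<gamma> (Suc n) \<and> \<gamma> 0 = i \<and> \<gamma> (Suc n) = j)"
  proof
    assume "\<exists>k. 0 < matpow P n i k \<and> 0 < P k j"
    then obtain k \<gamma> where "is_path P \<gamma> n" "\<gamma> 0 = i" "\<gamma> n = k" "0 < P k j"
      using Suc.IH by blast
    then have "is_path P (\<gamma>(Suc n := j)) (Suc n)"
      by (auto simp: is_path_def less_Suc_eq)
    with \<open>\<gamma> 0 = i\<close> show "\<exists>\<gamma>. is_path P \<gamma> (Suc n) \<and> \<gamma> 0 = i \<and> \<gamma> (Suc n) = j"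
      by (intro exI[of _ "\<gamma>(Suc n := j)"]) simp
  next
    assume "\<exists>\<gamma>. is_path P \<gamma> (Suc n) \<and> \<gamma> 0 = i \<and> \<gamma> (Suc n) = j"
    then obtain \<gamma> where \<gamma>: "is_path P \<gamma> (Suc n)" "\<gamma> 0 = i" "\<gamma> (Suc n) = j" by blast
    then have "0 < matpow P n i (\<gamma> n)"
      using Suc.IH is_path_prefix[OF \<gamma>(1), of n] by auto
    moreover have "0 < P (\<gamma> n) j"
      using \<gamma> unfolding is_path_def by (metis lessI)
    ultimately show "\<exists>k. 0 < matpow P n i k \<and> 0 < P k j" by blast
  qed
  finally show ?case .
qed

end

definition intermediate_closed :: "('a::countable \<Rightarrow> 'a \<Rightarrow> real) \<Rightarrow> 'a set \<Rightarrow> bool" where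
  "intermediate_closed P C \<longleftrightarrow>
     (\<forall>n m i k j. i \<in> C \<longrightarrow> j \<in> C \<longrightarrow> 0 < matpow P n i k \<longrightarrow> 0 < matpow P m k j \<longrightarrow> k \<in> C)"

context stochastic_matrix
begin

lemma path_closed_iff_intermediate_closed:
  "(\<forall>\<gamma> l. is_path P \<gamma> l \<and> \<gamma> 0 \<in> C \<and> \<gamma> l \<in> C \<longrightarrow> (\<forall>k\<le>l. \<gamma> k \<in> C))
    \<longleftrightarrow> intermediate_closed P C"
  unfolding intermediate_closed_def
proof safe
  fix n m i k j
  assume closed: "\<forall>\<gamma> l. is_path P \<gamma> l \<and> \<gamma> 0 \<in> C \<and> \<gamma> l \<in> C \<longrightarrow> (\<forall>k\<le>l. \<gamma> k \<in> C)"
    and "i \<in> C" "j \<in> C" "0 < matpow P n i k" "0 < matpow P m k j"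
  then obtain \<gamma>1 \<gamma>2 where "is_path P \<gamma>1 n" "\<gamma>1 0 = i" "\<gamma>1 n = k"
    and "is_path P \<gamma>2 m" "\<gamma>2 0 = k" "\<gamma>2 m = j"
    using matpow_pos_iff_path by metis
  moreover define \<gamma> where "\<gamma> = (\<lambda>t. if t \<le> n then \<gamma>1 t else \<gamma>2 (t - n))"
  ultimately have "is_path P \<gamma> (n + m)" "\<gamma> 0 = i" "\<gamma> (n + m) = j" "\<gamma> n = k"
    using is_path_append[of P \<gamma>1 n \<gamma>2 m] by auto
  then show "k \<in> C"
    using closed \<open>i \<in> C\<close> \<open>j \<in> C\<close> by (metis le_add1)
next
  fix \<gamma> l k
  assume closed: "\<forall>n m i k j. i \<in> C \<longrightarrow> j \<in> C \<longrightarrow> 0 < matpow P n i k \<longrightarrow> 0 < matpow P m k j \<longrightarrow> k \<in> C"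
    and \<gamma>: "is_path P \<gamma> l" "\<gamma> 0 \<in> C" "\<gamma> l \<in> C" and "k \<le> l"
  have "0 < matpow P k (\<gamma> 0) (\<gamma> k)"
    using matpow_pos_iff_path is_path_prefix[OF \<gamma>(1) \<open>k \<le> l\<close>] by blast
  moreover have "0 < matpow P (l - k) (\<gamma> k) (\<gamma> l)"
    using is_path_suffix[OF \<gamma>(1), of k] \<open>k \<le> l\<close>
    by (intro iffD2[OF matpow_pos_iff_path] exI[of _ "\<lambda>t. \<gamma> (k + t)"]) simp
  ultimately show "\<gamma> k \<in> C"
    using closed \<gamma>(2,3) by blast
qed

end

definition matrix_unit :: "'a \<Rightarrow> 'a \<Rightarrow> 'a \<Rightarrow> 'a \<Rightarrow> complex" where
  "matrix_unit a b = (\<lambda>i j. if i = a \<and> j = b then 1 else 0)"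

definition tensor_unit :: "'a \<Rightarrow> 'a \<Rightarrow> 'a \<Rightarrow> 'a \<Rightarrow> 'a \<Rightarrow> 'a \<Rightarrow> complex" where
  "tensor_unit a c b = (\<lambda>i k j. if i = a \<and> k = c \<and> j = b then 1 else 0)"

lemma matrix_unit_in_colmat:
  assumes "(a, b) \<in> S"
  shows "matrix_unit a b \<in> colmat S"
proof -
  have col: "((\<lambda>i. (cmod (matrix_unit a b i j))\<^sup>2) has_sum (cmod (matrix_unit a b a j))\<^sup>2) UNIV" for j
    by (rule has_sum_single_support) (simp add: matrix_unit_def)
  then have "(\<lambda>i. (cmod (matrix_unit a b i j))\<^sup>2) summable_on UNIV"
    and "(\<Sum>\<^sub>\<infinity>i. (cmod (matrix_unit a b i j))\<^sup>2) \<le> 1" for j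
    using infsumI[OF col[of j]] by (auto simp: summable_on_def matrix_unit_def)
  with assms show ?thesis
    unfolding colmat_def by (auto simp: matrix_unit_def)
qed

lemma tensor_unit_in_ten_model:
  assumes "(a, c) \<in> S1" "(c, b) \<in> S2"
  shows "tensor_unit a c b \<in> ten_model S1 S2"
proof -
  have "((\<lambda>(i, k). (cmod (tensor_unit a c b i k j))\<^sup>2) has_sum
      (\<lambda>(i, k). (cmod (tensor_unit a c b i k j))\<^sup>2) (a, c)) UNIV" for j
    by (rule has_sum_single_support) (auto simp: tensor_unit_def split: if_splits)
  then have col: "((\<lambda>(i, k). (cmod (tensor_unit a c b i k j))\<^sup>2) has_sum
      (cmod (tensor_unit a c b a c j))\<^sup>2) UNIV" for j
    by simp
  then have "(\<lambda>(i, k). (cmod (tensor_unit a c b i k j))\<^sup>2) summable_on UNIV"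
    and "(\<Sum>\<^sub>\<infinity>(i, k). (cmod (tensor_unit a c b i k j))\<^sup>2) \<le> 1" for j
    using infsumI[OF col[of j]] by (auto simp: summable_on_def tensor_unit_def)
  with assms show ?thesis
    unfolding ten_model_def by (auto simp: tensor_unit_def)
qed

lemma ten_inner_tensor_unit: "ten_inner (tensor_unit a c b) T b = T a c b"
proof -
  have "ten_inner (tensor_unit a c b) T b = (\<lambda>(i, k). cnj (tensor_unit a c b i k b) * T i k b) (a, c)"
    unfolding ten_inner_def by (rule infsum_single_support) (auto simp: tensor_unit_def split: if_splits)
  then show ?thesis
    by (simp add: tensor_unit_def)
qed

lemma matrix_unit_in_compress:
  assumes "matrix_unit a b \<in> X" "a \<in> C" "b \<in> C"
  shows "matrix_unit a b \<in> compress C X"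
proof -
  have "matrix_unit a b = (\<lambda>i j. proj C i * matrix_unit a b i j * proj C j)"
    using assms by (auto simp: fun_eq_iff matrix_unit_def proj_def)
  with assms(1) show ?thesis
    unfolding compress_def by blast
qed

lemma compress_eq_0: "A \<in> compress C X \<Longrightarrow> i \<notin> C \<or> j \<notin> C \<Longrightarrow> A i j = 0"
  by (auto simp: compress_def proj_def)

lemma compress_colmat_subset: "compress C (colmat S) \<subseteq> colmat S"
proof
  fix A assume "A \<in> compress C (colmat S)"
  then obtain B where A: "A = (\<lambda>i j. proj C i * B i j * proj C j)" and B: "B \<in> colmat S"
    unfolding compress_def by blast
  from B obtain M where M: "\<And>j. (\<Sum>\<^sub>\<infinity>i. (cmod (B i j))\<^sup>2) \<le> M"
    and B_col: "\<And>j. (\<lambda>i. (cmod (B i j))\<^sup>2) summable_on UNIV"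
    unfolding colmat_def by blast
  have le: "(cmod (A i j))\<^sup>2 \<le> (cmod (B i j))\<^sup>2" for i j
    by (simp add: A proj_def norm_mult)
  have A_col: "(\<lambda>i. (cmod (A i j))\<^sup>2) summable_on UNIV" for j
    by (rule summable_on_comparison_test[OF B_col le]) simp
  have "(\<Sum>\<^sub>\<infinity>i. (cmod (A i j))\<^sup>2) \<le> M" for j
  proof -
    have "(\<Sum>\<^sub>\<infinity>i. (cmod (A i j))\<^sup>2) \<le> (\<Sum>\<^sub>\<infinity>i. (cmod (B i j))\<^sup>2)"
      by (rule infsum_mono[OF A_col B_col le])
    with M[of j] show ?thesis by linarith
  qed
  with A_col B show "A \<in> colmat S"
    unfolding colmat_def by (auto simp: A)
qed

definition Uweight :: "('a::countable \<Rightarrow> 'a \<Rightarrow> real) \<Rightarrow> nat \<Rightarrow> nat \<Rightarrow> 'a \<Rightarrow> 'a \<Rightarrow> 'a \<Rightarrow> real" where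
  "Uweight P n m i k j =
     (if 0 < matpow P (n + m) i j
      then sqrt (matpow P n i k * matpow P m k j / matpow P (n + m) i j) else 0)"

definition Uadj ::
  "('a::countable \<Rightarrow> 'a \<Rightarrow> real) \<Rightarrow> nat \<Rightarrow> nat \<Rightarrow> ('a \<Rightarrow> 'a \<Rightarrow> complex) \<Rightarrow> 'a \<Rightarrow> 'a \<Rightarrow> 'a \<Rightarrow> complex" where
  "Uadj P n m A = (\<lambda>i k j. complex_of_real (Uweight P n m i k j) * A i j)"

lemma Umap_eq_infsum_Uweight:
  "Umap P n m S i j = (\<Sum>\<^sub>\<infinity>k. complex_of_real (Uweight P n m i k j) * S i k j)"
proof (cases "0 < matpow P (n + m) i j")
  case True
  have "Umap P n m S i j = complex_of_real (1 / sqrt (matpow P (n + m) i j)) *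
      (\<Sum>\<^sub>\<infinity>k. complex_of_real (sqrt (matpow P n i k)) * complex_of_real (sqrt (matpow P m k j)) * S i k j)"
    unfolding Umap_def if_P[OF True] ..
  also have "\<dots> = (\<Sum>\<^sub>\<infinity>k. complex_of_real (1 / sqrt (matpow P (n + m) i j)) *
      (complex_of_real (sqrt (matpow P n i k)) * complex_of_real (sqrt (matpow P m k j)) * S i k j))"
    by (rule infsum_cmult_right'[symmetric])
  also have "\<dots> = (\<Sum>\<^sub>\<infinity>k. complex_of_real (Uweight P n m i k j) * S i k j)"
    by (rule infsum_cong) (use True in \<open>simp add: Uweight_def real_sqrt_mult real_sqrt_divide\<close>)
  finally show ?thesis .
qed (simp add: Umap_def Uweight_def)

context stochastic_matrix
begin

lemma Uweight_nonzero_iff: "Uweight P n m i k j \<noteq> 0 \<longleftrightarrow> 0 < matpow P n i k \<and> 0 < matpow P m k j"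
  using matpow_add_pos_iff[of n m i j] matpow_nonneg[of n i k] matpow_nonneg[of m k j]
  by (auto simp: Uweight_def less_le)

lemma Uweight_sq_has_sum:
  "((\<lambda>k. (Uweight P n m i k j)\<^sup>2) has_sum (if 0 < matpow P (n + m) i j then 1 else 0)) UNIV"
proof (cases "0 < matpow P (n + m) i j")
  case True
  have "(Uweight P n m i k j)\<^sup>2 = matpow P n i k * matpow P m k j * (1 / matpow P (n + m) i j)" for k
    using True matpow_nonneg[of n i k] matpow_nonneg[of m k j] by (simp add: Uweight_def)
  with has_sum_cmult_left[OF matpow_add_has_sum[of n i m j], where c="1 / matpow P (n + m) i j"] True
  show ?thesis by simp
qed (simp add: Uweight_def)

lemma Uadj_column_has_sum:
  assumes "A \<in> colmat (supp P (n + m))"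
  shows "((\<lambda>(i, k). (cmod (Uadj P n m A i k j))\<^sup>2) has_sum (\<Sum>\<^sub>\<infinity>i. (cmod (A i j))\<^sup>2)) UNIV"
proof -
  have A_col: "(\<lambda>i. (cmod (A i j))\<^sup>2) summable_on UNIV"
    using assms unfolding colmat_def by blast
  have rows: "((\<lambda>k. (cmod (Uadj P n m A i k j))\<^sup>2) has_sum (cmod (A i j))\<^sup>2) UNIV" for i
  proof -
    have "A i j = 0" if "\<not> 0 < matpow P (n + m) i j"
      using assms that unfolding colmat_def supp_def by blast
    with has_sum_cmult_left[OF Uweight_sq_has_sum[of n m i j], where c="(cmod (A i j))\<^sup>2"]
    show ?thesis by (auto simp: Uadj_def norm_mult power_mult_distrib split: if_splits)
  qed
  have "(\<lambda>(i, k). (cmod (Uadj P n m A i k j))\<^sup>2) summable_on UNIV \<times> UNIV"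
    using summable_on_SigmaI[where f="\<lambda>(i, k). (cmod (Uadj P n m A i k j))\<^sup>2"
        and A=UNIV and B="\<lambda>_. UNIV" and g="\<lambda>i. (cmod (A i j))\<^sup>2"] rows A_col
    by auto
  then show ?thesis
    using has_sum_SigmaI[where f="\<lambda>(i, k). (cmod (Uadj P n m A i k j))\<^sup>2"
        and A=UNIV and B="\<lambda>_. UNIV" and g="\<lambda>i. (cmod (A i j))\<^sup>2"] rows has_sum_infsum[OF A_col]
    by auto
qed

lemma Uadj_in_ten_model:
  assumes A: "A \<in> colmat (supp P (n + m))"
    and supp: "\<And>i k j. A i j \<noteq> 0 \<Longrightarrow> 0 < matpow P n i k \<Longrightarrow> 0 < matpow P m k j \<Longrightarrow>
      (i, k) \<in> S1 \<and> (k, j) \<in> S2"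
  shows "Uadj P n m A \<in> ten_model S1 S2"
proof -
  obtain M where M: "\<And>j. (\<Sum>\<^sub>\<infinity>i. (cmod (A i j))\<^sup>2) \<le> M"
    using A unfolding colmat_def by blast
  have "Uadj P n m A i k j = 0" if "(i, k) \<notin> S1 \<or> (k, j) \<notin> S2" for i k j
    using supp[of i j k] that Uweight_nonzero_iff[of n m i k j] by (auto simp: Uadj_def)
  moreover have "(\<lambda>(i, k). (cmod (Uadj P n m A i k j))\<^sup>2) summable_on UNIV"
    and "(\<Sum>\<^sub>\<infinity>(i, k). (cmod (Uadj P n m A i k j))\<^sup>2) \<le> M" for j
    using Uadj_column_has_sum[OF A, of j] M[of j] by (auto simp: summable_on_def infsumI)
  ultimately show ?thesis
    unfolding ten_model_def by blast
qed

lemma Umap_adjoint: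
  assumes A: "A \<in> colmat (supp P (n + m))" and S: "S \<in> ten_model S1 S2"
  shows "arv_inner (Umap P n m S) A j = ten_inner S (Uadj P n m A) j"
proof -
  define F where "F = (\<lambda>(i, k). cnj (S i k j) * Uadj P n m A i k j)"
  have "F summable_on UNIV"
  proof (rule abs_summable_summable)
    have "(\<lambda>(i, k). (cmod (S i k j))\<^sup>2) summable_on UNIV"
      using S unfolding ten_model_def by blast
    moreover have "(\<lambda>(i, k). (cmod (Uadj P n m A i k j))\<^sup>2) summable_on UNIV"
      using Uadj_column_has_sum[OF A] by (auto simp: summable_on_def)
    ultimately have sum: "(\<lambda>x. (\<lambda>(i, k). (cmod (S i k j))\<^sup>2) x + (\<lambda>(i, k). (cmod (Uadj P n m A i k j))\<^sup>2) x)
        summable_on UNIV"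
      by (rule summable_on_add)
    have bound: "norm (F x) \<le> (\<lambda>(i, k). (cmod (S i k j))\<^sup>2) x + (\<lambda>(i, k). (cmod (Uadj P n m A i k j))\<^sup>2) x"
      for x
    proof -
      have "cmod (cnj s * t) \<le> (cmod s)\<^sup>2 + (cmod t)\<^sup>2" for s t :: complex
        using sum_squares_bound[of "cmod s" "cmod t"] mult_nonneg_nonneg[OF norm_ge_zero[of s] norm_ge_zero[of t]]
        unfolding norm_mult complex_mod_cnj by linarith
      then show ?thesis by (cases x) (simp add: F_def)
    qed
    show "(\<lambda>x. norm (F x)) summable_on UNIV"
      by (rule Infinite_Sum.abs_summable_on_comparison_test'[OF sum bound])
  qed
  have row: "cnj (Umap P n m S i j) * A i j = (\<Sum>\<^sub>\<infinity>k. F (i, k))" for i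
  proof -
    have "cnj (Umap P n m S i j) * A i j =
        (\<Sum>\<^sub>\<infinity>k. cnj (complex_of_real (Uweight P n m i k j) * S i k j)) * A i j"
      by (simp only: Umap_eq_infsum_Uweight infsum_cnj)
    also have "\<dots> = (\<Sum>\<^sub>\<infinity>k. cnj (complex_of_real (Uweight P n m i k j) * S i k j) * A i j)"
      by (rule infsum_cmult_left'[symmetric])
    also have "\<dots> = (\<Sum>\<^sub>\<infinity>k. F (i, k))"
      by (simp add: F_def Uadj_def mult_ac)
    finally show ?thesis .
  qed
  have "arv_inner (Umap P n m S) A j = (\<Sum>\<^sub>\<infinity>i. \<Sum>\<^sub>\<infinity>k. F (i, k))"
    unfolding arv_inner_def using row by simp
  also have "\<dots> = infsum F UNIV"
    using infsum_Sigma_banach[of F UNIV "\<lambda>_. UNIV"] \<open>F summable_on UNIV\<close> by simp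
  also have "\<dots> = ten_inner S (Uadj P n m A) j"
    by (simp add: ten_inner_def F_def)
  finally show ?thesis .
qed

lemma intermediate_closed_imp_reducing:
  assumes closed: "intermediate_closed P C"
  shows "reducing P C"
  unfolding reducing_def
proof (intro allI ballI)
  fix n m A assume A_compr: "A \<in> compress C (Arv P (n + m))"
  then have A: "A \<in> colmat (supp P (n + m))"
    using compress_colmat_subset unfolding Arv_def by blast
  have "Uadj P n m A \<in> ten_model (supp P n) (supp P m)"
    by (rule Uadj_in_ten_model[OF A]) (simp add: supp_def)
  then have "is_Uadj P n m A (Uadj P n m A)"
    unfolding is_Uadj_def using Umap_adjoint[OF A] by blast
  moreover have "Uadj P n m A \<in> ten_model (csupp P C n) (csupp P C m)"
  proof (rule Uadj_in_ten_model[OF A])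
    fix i k j assume "A i j \<noteq> 0" and ik: "0 < matpow P n i k" and kj: "0 < matpow P m k j"
    then have "i \<in> C" "j \<in> C"
      using compress_eq_0[OF A_compr] by blast+
    moreover from this have "k \<in> C"
      using closed ik kj unfolding intermediate_closed_def by blast
    ultimately show "(i, k) \<in> csupp P C n \<and> (k, j) \<in> csupp P C m"
      using ik kj by (simp add: csupp_def supp_def)
  qed
  ultimately show "\<exists>T. is_Uadj P n m A T \<and> T \<in> ten_model (csupp P C n) (csupp P C m)"
    by blast
qed

lemma reducing_imp_intermediate_closed:
  assumes "reducing P C"
  shows "intermediate_closed P C"
  unfolding intermediate_closed_def
proof (intro allI impI)
  fix n m i k j
  assume "i \<in> C" "j \<in> C" and ik: "0 < matpow P n i k" and kj: "0 < matpow P m k j"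
  then have "(i, j) \<in> supp P (n + m)"
    using matpow_add_pos_iff by (auto simp: supp_def)
  then have E: "matrix_unit i j \<in> colmat (supp P (n + m))"
    by (rule matrix_unit_in_colmat)
  then have "matrix_unit i j \<in> compress C (Arv P (n + m))"
    unfolding Arv_def using \<open>i \<in> C\<close> \<open>j \<in> C\<close> by (rule matrix_unit_in_compress)
  then obtain T where adj: "is_Uadj P n m (matrix_unit i j) T"
    and T: "T \<in> ten_model (csupp P C n) (csupp P C m)"
    using assms unfolding reducing_def by blast
  have S: "tensor_unit i k j \<in> ten_model (supp P n) (supp P m)"
    using ik kj by (intro tensor_unit_in_ten_model) (auto simp: supp_def)
  have "T i k j = arv_inner (Umap P n m (tensor_unit i k j)) (matrix_unit i j) j"
    using adj S unfolding is_Uadj_def by (simp add: ten_inner_tensor_unit)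
  also have "\<dots> = Uadj P n m (matrix_unit i j) i k j"
    using Umap_adjoint[OF E S] by (simp add: ten_inner_tensor_unit)
  also have "\<dots> \<noteq> 0"
    using Uweight_nonzero_iff ik kj by (simp add: Uadj_def matrix_unit_def)
  finally have "(i, k) \<in> csupp P C n"
    using T unfolding ten_model_def by blast
  then show "k \<in> C"
    by (simp add: csupp_def)
qed

end

theorem mainTheorem13:
  fixes P :: "'a::countable \<Rightarrow> 'a \<Rightarrow> real" and C :: "'a set"
  assumes "stochastic P"
  shows "reducing P C \<longleftrightarrow>
    (\<forall>(\<gamma>::nat \<Rightarrow> 'a) l. is_path P \<gamma> l \<and> \<gamma> 0 \<in> C \<and> \<gamma> l \<in> C \<longrightarrow> (\<forall>k\<le>l. \<gamma> k \<in> C))"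
proof -
  interpret stochastic_matrix P
    using assms by unfold_locales
  have "reducing P C \<longleftrightarrow> intermediate_closed P C"
    using reducing_imp_intermediate_closed intermediate_closed_imp_reducing by blast
  then show ?thesis
    using path_closed_iff_intermediate_closed by simp
qed

end
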